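(* Let $\mathbb{K}$ be a field and let $\Delta$ be a $d$-dimensional simplicial complex on vertex set $[n]$ whose $d$-dimensional facets are $F_1,\dots,F_s$ (it may have further facets of smaller dimension). Assume $\tilde H_d(\Delta;\mathbb{K})\neq 0$ and let $F=c_1F_1+\dots+c_sF_s$ ($c_i\in\mathbb{K}$) be a nonzero element of $\tilde H_d(\Delta;\mathbb{K})$. Put $$F_\Delta=c_1x_{F_1}V(F_1)+\dots+c_sx_{F_s}V(F_s)=c_1\sum_{\sigma\in S^{F_1}}\operatorname{sign}(\sigma)\,x^{\mu}_{\sigma(F_1)}+\dots+c_s\sum_{\sigma\in S^{F_s}}\operatorname{sign}(\sigma)\,x^{\mu}_{\sigma(F_s)},$$ where $\mu=(d+1,d,\dots,1)$. Then $F_\Delta$ (viewed in $S$ via $x_i\mapsto y_i$) is a $\binom{d+2}{2}$-coinvariant stress of $\Delta$, i.e. $F_\Delta\in\big(I_\Delta+(e_1,\dots,e_{d+1})\big)^{-1}_{-\binom{d+2}{2}}$. In particular $\dim_{\mathbb{K}}\big(I_\Delta+(e_1,\dots,e_{d+1})\big)^{-1}_{-\binom{d+2}{2}}>0$.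
   Context: $R=\mathbb{K}[x_1,\dots,x_n]$ with $\deg x_i=1$; $S=\mathbb{K}[y_1,\dots,y_n]$ with $\deg y_i=-1$, made into an $R$-module by contraction: $x^a\circ y^b=y^{b-a}$ if $b_i\ge a_i$ for all $i$ and $0$ otherwise, extended linearly. For an ideal $I\subset R$, its inverse system is $I^{-1}=\{G\in S: g\circ G=0 \text{ for all } g\in I\}$, and $I^{-1}_{-k}$ is its degree $-k$ part. Polynomials in $R$ are identified with polynomials in $S$ via $x_i\leftrightarrow y_i$. $I_\Delta=(x_\tau:\tau\subseteq[n],\ \tau\notin\Delta)$ is the Stanley–Reisner ideal, where $x_\tau=\prod_{i\in\tau}x_i$. $e_k=\sum_{j_1<\dots<j_k}x_{j_1}\cdots x_{j_k}$ is the $k$-th elementary symmetric polynomial in $x_1,\dots,x_n$. The space of $k$-coinvariant stresses of $\Delta$ is $(I_\Delta+(e_1,\dots,e_{d+1}))^{-1}_{-k}$. For $B=\{i_1<\dots<i_m\}\subseteq[n]$, $V(B)=\prod_{j<k}(x_{i_j}-x_{i_k})$ is the Vandermonde determinant. Simplicial homology is computed with faces oriented by increasing vertex order. $S^{F}$ is the symmetric group on the elements of $F$; for $F=\{i_1<\dots<i_{d+1}\}$ and $\sigma\in S^F$, $x^{\mu}_{\sigma(F)}=\prod_{j=1}^{d+1}x_{\sigma(i_j)}^{\mu_j}$. *)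

theory Defs
  imports "HOL-Library.Poly_Mapping"
begin

text \<open>Variable i stands for x_i
  (and, via the identification x_i = y_i, also for y_i).  Vertex set is [n] = {1..n}.\<close>

type_synonym 'a mpoly = "(nat \<Rightarrow>\<^sub>0 nat) \<Rightarrow>\<^sub>0 'a"

definition Var :: "nat \<Rightarrow> 'a::comm_ring_1 mpoly" where
  "Var i = Poly_Mapping.single (Poly_Mapping.single i 1) 1"

definition poly_ring :: "nat \<Rightarrow> 'a::comm_ring_1 mpoly set" where
  "poly_ring n = {p. \<forall>m\<in>Poly_Mapping.keys p. Poly_Mapping.keys m \<subseteq> {1..n}}"

text \<open>Homogeneous of (total) degree k (in S this is degree -k).\<close>
definition homogeneous :: "nat \<Rightarrow> 'a::comm_ring_1 mpoly \<Rightarrow> bool" where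
  "homogeneous k p \<longleftrightarrow> (\<forall>m\<in>Poly_Mapping.keys p. (\<Sum>i\<in>Poly_Mapping.keys m. Poly_Mapping.lookup m i) = k)"

definition mon_dvd :: "(nat \<Rightarrow>\<^sub>0 nat) \<Rightarrow> (nat \<Rightarrow>\<^sub>0 nat) \<Rightarrow> bool" where
  "mon_dvd a b \<longleftrightarrow> (\<forall>i. Poly_Mapping.lookup a i \<le> Poly_Mapping.lookup b i)"

definition contract :: "'a::comm_ring_1 mpoly \<Rightarrow> 'a mpoly \<Rightarrow> 'a mpoly" where
  "contract g G = (\<Sum>a\<in>Poly_Mapping.keys g. \<Sum>b\<in>Poly_Mapping.keys G.
      (if mon_dvd a b then Poly_Mapping.single (b - a) (Poly_Mapping.lookup g a * Poly_Mapping.lookup G b) else 0))"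

definition ideal_gen :: "nat \<Rightarrow> 'a::comm_ring_1 mpoly set \<Rightarrow> 'a mpoly set" where
  "ideal_gen n Gs = {\<Sum>g\<in>Gs. h g * g | h. \<forall>g\<in>Gs. h g \<in> poly_ring n}"

definition inverse_system_deg :: "nat \<Rightarrow> 'a::comm_ring_1 mpoly set \<Rightarrow> nat \<Rightarrow> 'a mpoly set" where
  "inverse_system_deg n I k =
     {G \<in> poly_ring n. homogeneous k G \<and> (\<forall>g\<in>I. contract g G = 0)}"

definition x_set :: "nat set \<Rightarrow> 'a::comm_ring_1 mpoly" where
  "x_set \<tau> = (\<Prod>i\<in>\<tau>. Var i)"

definition elem_sym :: "nat \<Rightarrow> nat \<Rightarrow> 'a::comm_ring_1 mpoly" where
  "elem_sym n k = (\<Sum>\<tau>\<in>{\<tau>. \<tau> \<subseteq> {1..n} \<and> card \<tau> = k}. x_set \<tau>)"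

definition vandermonde :: "nat set \<Rightarrow> 'a::comm_ring_1 mpoly" where
  "vandermonde B = (\<Prod>(i,j)\<in>{(i,j). i \<in> B \<and> j \<in> B \<and> i < j}. Var i - Var j)"

definition SR_gens :: "nat \<Rightarrow> nat set set \<Rightarrow> 'a::comm_ring_1 mpoly set" where
  "SR_gens n \<Delta> = x_set ` {\<tau>. \<tau> \<subseteq> {1..n} \<and> \<tau> \<notin> \<Delta>}"

definition coinv_ideal :: "nat \<Rightarrow> nat set set \<Rightarrow> nat \<Rightarrow> 'a::comm_ring_1 mpoly set" where
  "coinv_ideal n \<Delta> d = ideal_gen n (SR_gens n \<Delta> \<union> elem_sym n ` {1..d+1})"

definition coinv_stresses :: "nat \<Rightarrow> nat set set \<Rightarrow> nat \<Rightarrow> nat \<Rightarrow> 'a::comm_ring_1 mpoly set" where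
  "coinv_stresses n \<Delta> d k = inverse_system_deg n (coinv_ideal n \<Delta> d) k"

definition simplicial_complex :: "nat \<Rightarrow> nat set set \<Rightarrow> bool" where
  "simplicial_complex n \<Delta> \<longleftrightarrow> \<Delta> \<noteq> {} \<and> (\<forall>F\<in>\<Delta>. F \<subseteq> {1..n}) \<and>
     (\<forall>F\<in>\<Delta>. \<forall>G. G \<subseteq> F \<longrightarrow> G \<in> \<Delta>)"

definition dim_complex :: "nat set set \<Rightarrow> nat \<Rightarrow> bool" where
  "dim_complex \<Delta> d \<longleftrightarrow> (\<exists>F\<in>\<Delta>. card F = d + 1) \<and> (\<forall>F\<in>\<Delta>. card F \<le> d + 1)"

text \<open>Reduced simplicial boundary with faces oriented by increasing vertex order:
  coefficient of the (card G)-element face G in the boundary of the chain c supported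
  on the (card G + 1)-element faces of Delta.  The empty face is included
  (reduced homology).\<close>
definition boundary_coeff :: "nat set set \<Rightarrow> (nat set \<Rightarrow> 'a::comm_ring_1) \<Rightarrow> nat set \<Rightarrow> 'a" where
  "boundary_coeff \<Delta> c G = (\<Sum>v\<in>{v. v \<notin> G \<and> insert v G \<in> \<Delta>}.
      (-1) ^ card {u\<in>G. u < v} * c (insert v G))"

text \<open>Since Delta has no faces of dimension d+1, H~_d(Delta;K) = Z_d, the d-cycles:
  chains c on the d-faces with zero boundary.  Nonzero homology class = nonzero cycle.\<close>
definition d_faces :: "nat set set \<Rightarrow> nat \<Rightarrow> nat set set" where
  "d_faces \<Delta> d = {F\<in>\<Delta>. card F = d + 1}"

definition is_top_cycle :: "nat set set \<Rightarrow> nat \<Rightarrow> (nat set \<Rightarrow> 'a::comm_ring_1) \<Rightarrow> bool" where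
  "is_top_cycle \<Delta> d c \<longleftrightarrow> (\<forall>G\<in>\<Delta>. card G = d \<longrightarrow> boundary_coeff \<Delta> c G = 0)"

definition F_Delta :: "nat set set \<Rightarrow> nat \<Rightarrow> (nat set \<Rightarrow> 'a::comm_ring_1) \<Rightarrow> 'a mpoly" where
  "F_Delta \<Delta> d c = (\<Sum>F\<in>d_faces \<Delta> d. Poly_Mapping.single 0 (c F) * x_set F * vandermonde F)"

end

theory Submission
  imports Defs
begin

(* Contracting x_F V(F) by a squarefree monomial x_tau gives x_(F - tau) V(F) if tau is a subset
   of F, and 0 otherwise.  Hence the Stanley-Reisner generators annihilate F_Delta, contraction
   by x_F0 for a d-face F0 leaves c_F0 V(F0), so F_Delta is nonzero, and e_k contracts x_F V(F)
   to e_(d+1-k)(F) V(F).  Adjoin a cone vertex 0: the alternating sum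
   sum_v (-1)^pos(v) e_j(H - v) V(H - v) over H = {0} u F is a determinant with linearly
   dependent columns, so it vanishes, and this expresses e_j(F) V(F) as
   sum_v (-1)^pos(v) Phi(F - v) with Phi(G) = e_j({0} u G) V({0} u G).  Weighted by the
   coefficients of a d-cycle, these sums add up to the pairing of the boundary of the cycle
   with Phi, which is zero. *)

section \<open>Contraction\<close>

type_synonym monom = "nat \<Rightarrow>\<^sub>0 nat"

lemma lookup_single_mult_add:
  "Poly_Mapping.lookup (Poly_Mapping.single t c * p) (t + m) = c * Poly_Mapping.lookup p m"
  for p :: "'a::comm_ring_1 mpoly"
proof -
  have "Poly_Mapping.lookup (Poly_Mapping.single t c * p) k
      = (\<Sum>q. c * Poly_Mapping.lookup p q when k = t + q)" for k
    by (simp add: lookup_mult lookup_single when_mult Sum_any_right_distrib mult_when)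
  then show ?thesis
    by simp
qed

lemma lookup_const_mult:
  "Poly_Mapping.lookup (Poly_Mapping.single 0 c * p) m = c * Poly_Mapping.lookup p m"
  for p :: "'a::comm_ring_1 mpoly"
  using lookup_single_mult_add[of 0 c p m] by simp

lemma poly_mapping_sum_single:
  "p = (\<Sum>a\<in>Poly_Mapping.keys p. Poly_Mapping.single a (Poly_Mapping.lookup p a))"
  by (intro poly_mapping_eqI) (simp add: lookup_sum lookup_single when_def sum.delta in_keys_iff)

lemma minus_eq_iff_eq_add_if_mon_dvd:
  assumes "mon_dvd a b"
  shows "b - a = m \<longleftrightarrow> b = a + (m::monom)"
  using assms unfolding mon_dvd_def poly_mapping_eq_iff fun_eq_iff
  by (simp add: lookup_minus lookup_add) (metis add_diff_cancel_left' le_add_diff_inverse)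

lemma lookup_contract:
  "Poly_Mapping.lookup (contract g G) m =
     (\<Sum>a\<in>Poly_Mapping.keys g. Poly_Mapping.lookup g a * Poly_Mapping.lookup G (a + m))"
proof -
  have "Poly_Mapping.lookup (if mon_dvd a b then Poly_Mapping.single (b - a) x else 0) m =
      (if b = a + m then x else 0)" for a b and x :: 'a
    using minus_eq_iff_eq_add_if_mon_dvd[of a b m]
    by (auto simp: lookup_single when_def mon_dvd_def lookup_add)
  then show ?thesis
    by (simp add: contract_def lookup_sum sum.delta in_keys_iff) (rule sum.cong; simp)
qed

lemma lookup_contract_superset:
  assumes "finite A" "Poly_Mapping.keys g \<subseteq> A"
  shows "Poly_Mapping.lookup (contract g G) m =
     (\<Sum>a\<in>A. Poly_Mapping.lookup g a * Poly_Mapping.lookup G (a + m))"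
  unfolding lookup_contract
  by (rule sum.mono_neutral_left) (use assms in \<open>auto simp: in_keys_iff\<close>)

lemma contract_sum_left: "contract (\<Sum>i\<in>I. g i) G = (\<Sum>i\<in>I. contract (g i) G)"
proof (cases "finite I")
  case True
  let ?A = "\<Union>i\<in>I. Poly_Mapping.keys (g i)"
  have fin: "finite ?A"
    using True by auto
  show ?thesis
  proof (rule poly_mapping_eqI)
    fix m
    have "Poly_Mapping.lookup (contract (\<Sum>i\<in>I. g i) G) m
        = (\<Sum>a\<in>?A. Poly_Mapping.lookup (\<Sum>i\<in>I. g i) a * Poly_Mapping.lookup G (a + m))"
      by (rule lookup_contract_superset[OF fin keys_sum])
    also have "\<dots> = (\<Sum>i\<in>I. \<Sum>a\<in>?A. Poly_Mapping.lookup (g i) a * Poly_Mapping.lookup G (a + m))"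
      by (simp add: lookup_sum sum_distrib_right sum.swap[of _ ?A I])
    also have "\<dots> = (\<Sum>i\<in>I. Poly_Mapping.lookup (contract (g i) G) m)"
      by (intro sum.cong refl lookup_contract_superset[symmetric]) (use fin in auto)
    finally show "Poly_Mapping.lookup (contract (\<Sum>i\<in>I. g i) G) m
        = Poly_Mapping.lookup (\<Sum>i\<in>I. contract (g i) G) m"
      by (simp add: lookup_sum)
  qed
qed (simp add: contract_def)

lemma contract_sum_right: "contract g (\<Sum>i\<in>I. G i) = (\<Sum>i\<in>I. contract g (G i))"
proof (cases "finite I")
  case True
  then show ?thesis
    by (intro poly_mapping_eqI)
       (simp add: lookup_contract lookup_sum sum_distrib_left sum.swap[of _ I])
qed (simp add: contract_def)

lemma contract_const_mult_right:
  "contract g (Poly_Mapping.single 0 c * G) = Poly_Mapping.single 0 c * contract g G"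
  for G :: "'a::comm_ring_1 mpoly"
  by (intro poly_mapping_eqI) (simp add: lookup_contract lookup_const_mult sum_distrib_left mult.left_commute)

lemma contract_0_right [simp]: "contract g 0 = 0"
  by (simp add: contract_def)

lemma lookup_contract_single:
  "Poly_Mapping.lookup (contract (Poly_Mapping.single t c) G) m = c * Poly_Mapping.lookup G (t + m)"
  by (simp add: lookup_contract)

lemma contract_mult: "contract (p * q) G = contract p (contract q G)"
  for G :: "'a::comm_ring_1 mpoly"
proof -
  let ?P = "\<lambda>a. Poly_Mapping.single a (Poly_Mapping.lookup p a)"
  let ?Q = "\<lambda>b. Poly_Mapping.single b (Poly_Mapping.lookup q b)"
  have single: "contract (?P a * ?Q b) G = contract (?P a) (contract (?Q b) G)" for a b
    by (intro poly_mapping_eqI) (simp add: mult_single lookup_contract_single add_ac mult_ac)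
  have "p * q = (\<Sum>a\<in>Poly_Mapping.keys p. \<Sum>b\<in>Poly_Mapping.keys q. ?P a * ?Q b)"
    by (subst poly_mapping_sum_single[of p], subst poly_mapping_sum_single[of q]) (rule sum_product)
  then have "contract (p * q) G
      = (\<Sum>a\<in>Poly_Mapping.keys p. contract (?P a) (contract (\<Sum>b\<in>Poly_Mapping.keys q. ?Q b) G))"
    by (simp add: contract_sum_left contract_sum_right single)
  also have "\<dots> = contract p (contract q G)"
    by (simp flip: contract_sum_left poly_mapping_sum_single)
  finally show ?thesis .
qed

lemma contract_ideal_gen_eq_0:
  assumes "\<forall>g\<in>Gs. contract g G = 0" "p \<in> ideal_gen n Gs"
  shows "contract p G = 0"
proof -
  obtain h where "p = (\<Sum>g\<in>Gs. h g * g)"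
    using assms(2) unfolding ideal_gen_def by blast
  then show ?thesis
    using assms(1) by (simp add: contract_sum_left contract_mult)
qed

section \<open>Squarefree monomials, supports and degrees\<close>

definition indicator_monom :: "nat set \<Rightarrow> monom" where
  "indicator_monom \<tau> = (\<Sum>i\<in>\<tau>. Poly_Mapping.single i 1)"

lemma keys_indicator_monom: "finite \<tau> \<Longrightarrow> Poly_Mapping.keys (indicator_monom \<tau>) = \<tau>"
  by (auto simp: indicator_monom_def in_keys_iff lookup_sum lookup_single when_def split: if_splits)

lemma keys_monom_add: "Poly_Mapping.keys ((a::monom) + b) = Poly_Mapping.keys a \<union> Poly_Mapping.keys b"
  by (auto simp: in_keys_iff lookup_add)

lemma x_set_eq_single:
  "finite \<tau> \<Longrightarrow> (x_set \<tau> :: 'a::comm_ring_1 mpoly) = Poly_Mapping.single (indicator_monom \<tau>) 1"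
  by (induction \<tau> rule: finite_induct) (simp_all add: x_set_def indicator_monom_def Var_def mult_single)

lemma contract_x_set_mult:
  fixes Q :: "'a::comm_ring_1 mpoly"
  assumes "finite F" "\<tau> \<subseteq> F"
  shows "contract (x_set \<tau>) (x_set F * Q) = x_set (F - \<tau>) * Q"
proof -
  have fin: "finite \<tau>"
    using assms finite_subset by blast
  have "(x_set F :: 'a mpoly) = x_set \<tau> * x_set (F - \<tau>)"
    unfolding x_set_def by (simp add: prod.subset_diff[OF assms(2,1)] mult.commute)
  then show ?thesis
    by (intro poly_mapping_eqI)
       (simp add: mult.assoc x_set_eq_single[OF fin] lookup_contract_single lookup_single_mult_add)
qed

definition vars_in :: "nat set \<Rightarrow> 'a::zero mpoly \<Rightarrow> bool" where
  "vars_in S p \<longleftrightarrow> (\<forall>m\<in>Poly_Mapping.keys p. Poly_Mapping.keys m \<subseteq> S)"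

lemma poly_ring_eq_vars_in: "poly_ring n = {p. vars_in {1..n} p}"
  by (simp add: poly_ring_def vars_in_def)

lemma vars_in_single: "Poly_Mapping.keys t \<subseteq> S \<Longrightarrow> vars_in S (Poly_Mapping.single t c)"
  by (simp add: vars_in_def)

lemma vars_in_Var: "i \<in> S \<Longrightarrow> vars_in S (Var i)"
  by (simp add: vars_in_def Var_def)

lemma vars_in_diff: "vars_in S p \<Longrightarrow> vars_in S q \<Longrightarrow> vars_in S (p - q)"
  using keys_diff[of p q] by (auto simp: vars_in_def)

lemma vars_in_mult:
  "vars_in S p \<Longrightarrow> vars_in S q \<Longrightarrow> vars_in S (p * q :: 'a::comm_ring_1 mpoly)"
  using keys_mult[of p q] by (fastforce simp: vars_in_def keys_monom_add)

lemma vars_in_0 [simp]: "vars_in S 0" and vars_in_1 [simp]: "vars_in S 1"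
  by (simp_all add: vars_in_def)

lemma vars_in_add: "vars_in S p \<Longrightarrow> vars_in S q \<Longrightarrow> vars_in S (p + q)"
  using keys_add[of p q] by (auto simp: vars_in_def)

lemma vars_in_sum: "(\<And>i. i \<in> I \<Longrightarrow> vars_in S (f i)) \<Longrightarrow> vars_in S (\<Sum>i\<in>I. f i)"
  by (induction I rule: infinite_finite_induct) (auto intro: vars_in_add)

lemma vars_in_prod:
  "(\<And>i. i \<in> I \<Longrightarrow> vars_in S (f i)) \<Longrightarrow> vars_in S (\<Prod>i\<in>I. f i :: 'a::comm_ring_1 mpoly)"
  by (induction I rule: infinite_finite_induct) (auto intro: vars_in_mult)

lemma vars_in_x_set: "\<tau> \<subseteq> S \<Longrightarrow> vars_in S (x_set \<tau>)"
  unfolding x_set_def by (rule vars_in_prod) (auto intro: vars_in_Var)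

lemma vars_in_vandermonde: "F \<subseteq> S \<Longrightarrow> vars_in S (vandermonde F)"
  unfolding vandermonde_def by (rule vars_in_prod) (auto intro!: vars_in_diff vars_in_Var)

lemma contract_x_set_eq_0:
  fixes P :: "'a::comm_ring_1 mpoly"
  assumes "finite \<tau>" "\<not> \<tau> \<subseteq> S" "vars_in S P"
  shows "contract (x_set \<tau>) P = 0"
proof (rule poly_mapping_eqI)
  fix m
  have "indicator_monom \<tau> + m \<notin> Poly_Mapping.keys P"
    using assms unfolding vars_in_def by (metis keys_monom_add keys_indicator_monom Un_subset_iff)
  then show "Poly_Mapping.lookup (contract (x_set \<tau>) P) m = Poly_Mapping.lookup 0 m"
    by (simp add: x_set_eq_single[OF assms(1)] lookup_contract_single in_keys_iff)
qed

definition monom_degree :: "monom \<Rightarrow> nat" where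
  "monom_degree m = (\<Sum>i\<in>Poly_Mapping.keys m. Poly_Mapping.lookup m i)"

lemma monom_degree_add: "monom_degree (a + b) = monom_degree a + monom_degree b"
  unfolding monom_degree_def by (rule setsum_keys_plus_distrib) auto

lemma homogeneous_iff_monom_degree:
  "homogeneous k p \<longleftrightarrow> (\<forall>m\<in>Poly_Mapping.keys p. monom_degree m = k)"
  by (simp add: homogeneous_def monom_degree_def)

lemma homogeneous_0 [simp]: "homogeneous k 0"
  by (simp add: homogeneous_def)

lemma homogeneous_1 [simp]: "homogeneous 0 1"
  by (simp add: homogeneous_def)

lemma homogeneous_add: "homogeneous k p \<Longrightarrow> homogeneous k q \<Longrightarrow> homogeneous k (p + q)"
  using keys_add[of p q] by (auto simp: homogeneous_def)

lemma homogeneous_const: "homogeneous 0 (Poly_Mapping.single 0 c)"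
  by (simp add: homogeneous_iff_monom_degree monom_degree_def)

lemma homogeneous_Var: "homogeneous 1 (Var i)"
  by (simp add: homogeneous_iff_monom_degree Var_def monom_degree_def)

lemma homogeneous_diff: "homogeneous k p \<Longrightarrow> homogeneous k q \<Longrightarrow> homogeneous k (p - q)"
  using keys_diff[of p q] by (auto simp: homogeneous_iff_monom_degree)

lemma homogeneous_mult:
  "homogeneous j p \<Longrightarrow> homogeneous k q \<Longrightarrow> homogeneous (j + k) (p * q :: 'a::comm_ring_1 mpoly)"
  using keys_mult[of p q] by (fastforce simp: homogeneous_iff_monom_degree monom_degree_add)

lemma homogeneous_sum:
  "(\<And>i. i \<in> I \<Longrightarrow> homogeneous k (f i)) \<Longrightarrow> homogeneous k (\<Sum>i\<in>I. f i)"
  by (induction I rule: infinite_finite_induct) (auto intro: homogeneous_add)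

lemma homogeneous_prod:
  "(\<And>i. i \<in> I \<Longrightarrow> homogeneous (k i) (f i))
    \<Longrightarrow> homogeneous (\<Sum>i\<in>I. k i) (\<Prod>i\<in>I. f i :: 'a::comm_ring_1 mpoly)"
  by (induction I rule: infinite_finite_induct) (auto simp: homogeneous_mult)

lemma homogeneous_x_set: "finite \<tau> \<Longrightarrow> homogeneous (card \<tau>) (x_set \<tau>)"
  using homogeneous_prod[of \<tau> "\<lambda>_. 1" Var] homogeneous_Var unfolding x_set_def by auto

section \<open>Alternating sums of Vandermonde minors\<close>

lemma finite_Min_split:
  fixes H :: "'a::linorder set"
  assumes "finite H" "H \<noteq> {}"
  obtains a H' where "H = insert a H'" "finite H'" "\<forall>u\<in>H'. a < u" "card H = Suc (card H')"
proof (rule that)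
  show "H = insert (Min H) (H - {Min H})"
    using Min_in[OF assms] by auto
  show "\<forall>u\<in>H - {Min H}. Min H < u"
    using assms Min_le by (fastforce simp: order.strict_iff_order)
  show "card H = Suc (card (H - {Min H}))"
    using assms by (simp add: card_gt_0_iff)
qed (use assms in simp)

definition var_diff_prod :: "nat \<Rightarrow> nat set \<Rightarrow> 'a::comm_ring_1 mpoly" where
  "var_diff_prod a S = (\<Prod>u\<in>S. Var a - Var u)"

lemma var_diff_prod_remove:
  "finite S \<Longrightarrow> v \<in> S \<Longrightarrow> var_diff_prod a S = (Var a - Var v) * var_diff_prod a (S - {v})"
  unfolding var_diff_prod_def by (rule prod.remove)

lemma vandermonde_insert_min:
  assumes "finite S" "\<forall>u\<in>S. a < u"
  shows "vandermonde (insert a S) = (var_diff_prod a S * vandermonde S :: 'a::comm_ring_1 mpoly)"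
proof -
  let ?P = "\<lambda>S. {(i, j). i \<in> S \<and> j \<in> S \<and> i < j}"
  have pairs: "?P (insert a S) = Pair a ` S \<union> ?P S"
    using assms by auto
  have "finite (?P S)"
    by (rule finite_subset[of _ "S \<times> S"]) (use assms in auto)
  moreover have "Pair a ` S \<inter> ?P S = {}"
    using assms by auto
  ultimately have "vandermonde (insert a S) =
      (\<Prod>(i, j)\<in>Pair a ` S. Var i - Var j) * (vandermonde S :: 'a mpoly)"
    unfolding vandermonde_def pairs using assms by (intro prod.union_disjoint) auto
  moreover have "(\<Prod>(i, j)\<in>Pair a ` S. Var i - Var j) = (var_diff_prod a S :: 'a mpoly)"
    unfolding var_diff_prod_def by (subst prod.reindex) (auto simp: inj_on_def)
  ultimately show ?thesis
    by simp
qed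

lemma homogeneous_vandermonde:
  "finite F \<Longrightarrow> homogeneous (card F choose 2) (vandermonde F :: 'a::comm_ring_1 mpoly)"
proof (induction F rule: finite_linorder_min_induct)
  case empty
  then show ?case
    by (simp add: vandermonde_def numeral_2_eq_2)
next
  case (insert a S)
  have "homogeneous 1 (Var a - Var u :: 'a mpoly)" for u
    by (intro homogeneous_diff homogeneous_Var)
  then have "homogeneous (card S) (var_diff_prod a S :: 'a mpoly)"
    using homogeneous_prod[of S "\<lambda>_. 1" "\<lambda>u. Var a - Var u :: 'a mpoly"] by (simp add: var_diff_prod_def)
  moreover have "card (insert a S) choose 2 = card S + (card S choose 2)"
    using insert by (auto simp: numeral_2_eq_2)
  ultimately show ?case
    using insert by (simp add: vandermonde_insert_min homogeneous_mult)
qed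

definition position :: "nat set \<Rightarrow> nat \<Rightarrow> nat" where
  "position H v = card {u\<in>H. u < v}"

lemma position_insert_min:
  assumes "finite H" "\<forall>u\<in>H. a < u" "v \<in> H"
  shows "position (insert a H) v = Suc (position H v)"
proof -
  have "{u\<in>insert a H. u < v} = insert a {u\<in>H. u < v}" "a \<notin> H"
    using assms by auto
  then show ?thesis
    unfolding position_def using assms by simp
qed

lemma position_insert_min_self: "\<forall>u\<in>H. a < u \<Longrightarrow> position (insert a H) a = 0"
  unfolding position_def by auto

(* Up to sign, minor_sum w H is the determinant with rows (w v, 1, x_v, ..., x_v^(|H| - 2)),
   v in H, expanded along its first column.  It vanishes when w v is a polynomial in x_v of
   degree at most |H| - 2 whose coefficients are symmetric in H. *)
definition minor_sum :: "(nat \<Rightarrow> 'a::comm_ring_1 mpoly) \<Rightarrow> nat set \<Rightarrow> 'a mpoly" where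
  "minor_sum w H = (\<Sum>v\<in>H. (-1) ^ position H v * w v * vandermonde (H - {v}))"

lemma minor_sum_cong: "(\<And>v. v \<in> H \<Longrightarrow> w v = w' v) \<Longrightarrow> minor_sum w H = minor_sum w' H"
  unfolding minor_sum_def by simp

lemma minor_sum_diff: "minor_sum (\<lambda>v. f v - g v) H = minor_sum f H - minor_sum g H"
  by (simp add: minor_sum_def sum_subtractf algebra_simps)

lemma minor_sum_mult_left: "minor_sum (\<lambda>v. p * f v) H = p * minor_sum f H"
  by (simp add: minor_sum_def sum_distrib_left mult_ac)

lemma minor_sum_insert_min:
  assumes "finite H" "\<forall>u\<in>H. a < u"
  shows "minor_sum w (insert a H) =
    w a * vandermonde H - minor_sum (\<lambda>v. w v * var_diff_prod a (H - {v})) H"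
proof -
  have "a \<notin> H"
    using assms by auto
  have "(-1) ^ position (insert a H) v * w v * vandermonde (insert a H - {v}) =
      - ((-1) ^ position H v * (w v * var_diff_prod a (H - {v})) * vandermonde (H - {v}))"
    if "v \<in> H" for v
  proof -
    have "insert a H - {v} = insert a (H - {v})"
      using that \<open>a \<notin> H\<close> by auto
    then show ?thesis
      using assms that by (simp add: vandermonde_insert_min position_insert_min mult_ac)
  qed
  then show ?thesis
    using assms \<open>a \<notin> H\<close> unfolding minor_sum_def
    by (simp add: position_insert_min_self sum_negf insert_Diff_if)
qed

lemma minor_sum_const_rec:
  assumes "finite R" "\<forall>u\<in>R. b < u" "a < b"
  shows "minor_sum (\<lambda>_. 1) (insert a (insert b R)) =
    var_diff_prod b R * minor_sum (\<lambda>_. 1) (insert a R)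
    - var_diff_prod a R * minor_sum (\<lambda>_. 1) (insert b R)"
proof -
  let ?L = "var_diff_prod :: nat \<Rightarrow> nat set \<Rightarrow> 'a mpoly"
  let ?A = "minor_sum (\<lambda>v. ?L a (R - {v}) * ?L b (R - {v})) R"
  have "b \<notin> R" and aR: "\<forall>u\<in>R. a < u"
    using assms by auto
  have "?L a (insert b R - {v}) = (Var a - Var b) * ?L a (R - {v})" if "v \<in> R" for v
    using that \<open>b \<notin> R\<close> assms(1) by (auto simp: var_diff_prod_def insert_Diff_if)
  then have key_lhs: "minor_sum (\<lambda>v. ?L a (insert b R - {v}) * ?L b (R - {v})) R = (Var a - Var b) * ?A"
    by (simp add: minor_sum_mult_left[symmetric] mult.assoc cong: minor_sum_cong)
  have "?L b R * ?L a (R - {v}) - ?L a R * ?L b (R - {v}) =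
      (Var b - Var a) * (?L a (R - {v}) * ?L b (R - {v}))" if "v \<in> R" for v
    using that assms(1)
    by (simp add: var_diff_prod_remove[of R v a] var_diff_prod_remove[of R v b] algebra_simps)
  then have key_rhs: "?L b R * minor_sum (\<lambda>v. ?L a (R - {v})) R
      - ?L a R * minor_sum (\<lambda>v. ?L b (R - {v})) R = (Var b - Var a) * ?A"
    by (simp add: minor_sum_mult_left[symmetric] minor_sum_diff[symmetric] cong: minor_sum_cong)
  have "minor_sum (\<lambda>_. 1) (insert a (insert b R)) =
      vandermonde (insert b R) - minor_sum (\<lambda>v. ?L a (insert b R - {v})) (insert b R)"
    using minor_sum_insert_min[of "insert b R" a "\<lambda>_. 1"] assms aR by simp
  also have "\<dots> = ?L b R * vandermonde R - (?L a R * vandermonde R - (Var a - Var b) * ?A)"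
    using minor_sum_insert_min[OF assms(1,2), of "\<lambda>v. ?L a (insert b R - {v})"] \<open>b \<notin> R\<close>
    by (simp add: vandermonde_insert_min[OF assms(1,2)] key_lhs)
  also have "\<dots> = ?L b R * (vandermonde R - minor_sum (\<lambda>v. ?L a (R - {v})) R)
      - ?L a R * (vandermonde R - minor_sum (\<lambda>v. ?L b (R - {v})) R)"
    using key_rhs by (simp add: algebra_simps)
  finally show ?thesis
    by (simp add: minor_sum_insert_min[OF assms(1) aR] minor_sum_insert_min[OF assms(1,2)])
qed

lemma minor_sum_const_eq_0:
  assumes "finite H" "2 \<le> card H"
  shows "minor_sum (\<lambda>_. 1) H = (0 :: 'a::comm_ring_1 mpoly)"
  using assms
proof (induction "card H" arbitrary: H rule: less_induct)
  case less
  have "H \<noteq> {}"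
    using less.prems by auto
  then obtain a H' where H: "H = insert a H'" "finite H'" "\<forall>u\<in>H'. a < u" "card H = Suc (card H')"
    by (rule finite_Min_split[OF less.prems(1)])
  have "H' \<noteq> {}"
    using H(4) less.prems(2) by auto
  then obtain b R where H': "H' = insert b R" "finite R" "\<forall>u\<in>R. b < u" "card H' = Suc (card R)"
    by (rule finite_Min_split[OF H(2)])
  have "a < b" and aR: "\<forall>u\<in>R. a < u"
    using H(3) H'(1,3) by auto
  have rec: "minor_sum (\<lambda>_. 1 :: 'a mpoly) H = var_diff_prod b R * minor_sum (\<lambda>_. 1) (insert a R)
      - var_diff_prod a R * minor_sum (\<lambda>_. 1) (insert b R)"
    unfolding H(1) H'(1) by (rule minor_sum_const_rec[OF H'(2,3) \<open>a < b\<close>])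
  show ?case
  proof (cases "R = {}")
    case True
    have "minor_sum (\<lambda>_. 1) {x} = (1 :: 'a mpoly)" for x
      by (simp add: minor_sum_def vandermonde_def position_insert_min_self[of "{}"])
    then show ?thesis
      using rec True by (simp add: var_diff_prod_def)
  next
    case False
    then have cards: "card (insert a R) < card H" "2 \<le> card (insert a R)"
      "card (insert b R) < card H" "2 \<le> card (insert b R)"
      using H(4) H'(2,3,4) aR by (auto simp: Suc_le_eq card_gt_0_iff)
    have "minor_sum (\<lambda>_. 1 :: 'a mpoly) (insert a R) = 0"
      "minor_sum (\<lambda>_. 1 :: 'a mpoly) (insert b R) = 0"
      by (rule less.hyps; use cards H'(2) in simp)+
    then show ?thesis
      using rec by simp
  qed
qed

lemma minor_sum_Var_mult_insert_min:
  assumes "finite H" "\<forall>u\<in>H. a < u"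
  shows "minor_sum (\<lambda>v. Var v * w v) (insert a H) =
    Var a * minor_sum w (insert a H) + var_diff_prod a H * minor_sum w H"
proof -
  let ?g = "\<lambda>v. w v * var_diff_prod a (H - {v})"
  have "var_diff_prod a H * w v = (Var a - Var v) * ?g v" if "v \<in> H" for v
    using that assms(1) by (simp add: var_diff_prod_remove[of H v a] mult_ac)
  then have "var_diff_prod a H * minor_sum w H = minor_sum (\<lambda>v. (Var a - Var v) * ?g v) H"
    by (simp add: minor_sum_mult_left[symmetric] cong: minor_sum_cong)
  also have "\<dots> = Var a * minor_sum ?g H - minor_sum (\<lambda>v. Var v * ?g v) H"
    by (simp add: left_diff_distrib minor_sum_diff minor_sum_mult_left)
  finally have "var_diff_prod a H * minor_sum w H =
      Var a * minor_sum ?g H - minor_sum (\<lambda>v. Var v * ?g v) H" .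
  moreover have "minor_sum (\<lambda>v. Var v * w v) (insert a H) =
      Var a * w a * vandermonde H - minor_sum (\<lambda>v. Var v * ?g v) H"
    by (simp add: minor_sum_insert_min[OF assms] mult.assoc)
  ultimately show ?thesis
    by (simp add: minor_sum_insert_min[OF assms] right_diff_distrib mult.assoc)
qed

lemma minor_sum_power_eq_0:
  assumes "finite H" "i + 2 \<le> card H"
  shows "minor_sum (\<lambda>v. Var v ^ i) H = (0 :: 'a::comm_ring_1 mpoly)"
  using assms
proof (induction i arbitrary: H)
  case 0
  then show ?case
    using minor_sum_const_eq_0[of H] by simp
next
  case (Suc i)
  have "H \<noteq> {}"
    using Suc.prems by auto
  then obtain a H' where H: "H = insert a H'" "finite H'" "\<forall>u\<in>H'. a < u" "card H = Suc (card H')"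
    by (rule finite_Min_split[OF Suc.prems(1)])
  have "minor_sum (\<lambda>v. Var v ^ i :: 'a mpoly) H = 0" "minor_sum (\<lambda>v. Var v ^ i :: 'a mpoly) H' = 0"
    by (rule Suc.IH; use Suc.prems H(2,4) in simp)+
  then show ?case
    using minor_sum_Var_mult_insert_min[OF H(2,3), of "\<lambda>v. Var v ^ i :: 'a mpoly"] by (simp add: H(1))
qed

section \<open>Elementary symmetric polynomials\<close>

definition elem_sym_on :: "nat set \<Rightarrow> nat \<Rightarrow> 'a::comm_ring_1 mpoly" where
  "elem_sym_on S j = (\<Sum>\<tau>\<in>{\<tau>. \<tau> \<subseteq> S \<and> card \<tau> = j}. x_set \<tau>)"

lemma elem_sym_on_0: "finite S \<Longrightarrow> elem_sym_on S 0 = 1"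
proof -
  assume "finite S"
  then have "{\<tau>. \<tau> \<subseteq> S \<and> card \<tau> = 0} = {{}}"
    by (auto dest: finite_subset)
  then show ?thesis
    by (simp add: elem_sym_on_def x_set_def)
qed

lemma subsets_card_Suc_insert:
  assumes "finite S" "v \<notin> S"
  shows "{\<tau>. \<tau> \<subseteq> insert v S \<and> card \<tau> = Suc j} =
    {\<tau>. \<tau> \<subseteq> S \<and> card \<tau> = Suc j} \<union> insert v ` {\<tau>. \<tau> \<subseteq> S \<and> card \<tau> = j}"
    (is "?L = ?A \<union> insert v ` ?B")
proof (intro set_eqI iffI)
  fix \<tau> assume \<tau>: "\<tau> \<in> ?L"
  show "\<tau> \<in> ?A \<union> insert v ` ?B"
  proof (cases "v \<in> \<tau>")
    case True
    have "finite \<tau>"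
      using \<tau> assms(1) finite_subset by auto
    then have "\<tau> - {v} \<in> ?B"
      using \<tau> True by auto
    moreover have "\<tau> = insert v (\<tau> - {v})"
      using True by auto
    ultimately show ?thesis
      by blast
  qed (use \<tau> in auto)
next
  fix \<tau> assume "\<tau> \<in> ?A \<union> insert v ` ?B"
  then show "\<tau> \<in> ?L"
  proof
    assume "\<tau> \<in> insert v ` ?B"
    then obtain \<sigma> where "\<sigma> \<in> ?B" "\<tau> = insert v \<sigma>"
      by blast
    moreover have "finite \<sigma>" "v \<notin> \<sigma>"
      using calculation assms finite_subset by auto
    ultimately show ?thesis
      by auto
  qed auto
qed

lemma elem_sym_on_insert:
  assumes "finite S" "v \<notin> S"
  shows "elem_sym_on (insert v S) (Suc j) = elem_sym_on S (Suc j) + Var v * elem_sym_on S j"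
proof -
  let ?T = "\<lambda>k. {\<tau>. \<tau> \<subseteq> S \<and> card \<tau> = k}"
  have "finite (?T k)" for k
    using assms(1) by simp
  moreover have "?T (Suc j) \<inter> insert v ` ?T j = {}" "inj_on (insert v) (?T j)"
    using assms(2) by (auto simp: inj_on_def)
  moreover have "x_set (insert v \<sigma>) = Var v * x_set \<sigma>" if "\<sigma> \<in> ?T j" for \<sigma>
  proof -
    have "finite \<sigma>" "v \<notin> \<sigma>"
      using that assms finite_subset by auto
    then show ?thesis
      by (simp add: x_set_def)
  qed
  ultimately show ?thesis
    unfolding elem_sym_on_def subsets_card_Suc_insert[OF assms]
    by (simp add: sum.union_disjoint sum.reindex sum_distrib_left) (rule sum.cong; simp)
qed

lemma minor_sum_elem_sym_on_eq_0:
  assumes "finite H" "i + j + 2 \<le> card H"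
  shows "minor_sum (\<lambda>v. Var v ^ i * elem_sym_on (H - {v}) j) H = (0 :: 'a::comm_ring_1 mpoly)"
  using assms
proof (induction j arbitrary: i)
  case 0
  then show ?case
    using minor_sum_power_eq_0[of H i] by (simp add: elem_sym_on_0 cong: minor_sum_cong)
next
  case (Suc j)
  have "Var v ^ i * elem_sym_on (H - {v}) (Suc j) =
      elem_sym_on H (Suc j) * Var v ^ i - Var v ^ Suc i * (elem_sym_on (H - {v}) j :: 'a mpoly)"
    if "v \<in> H" for v
  proof -
    have "elem_sym_on H (Suc j) = elem_sym_on (H - {v}) (Suc j) + Var v * (elem_sym_on (H - {v}) j :: 'a mpoly)"
      using elem_sym_on_insert[of "H - {v}" v j] that Suc.prems(1) by (simp add: insert_absorb)
    then show ?thesis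
      by (simp add: algebra_simps)
  qed
  then have "minor_sum (\<lambda>v. Var v ^ i * elem_sym_on (H - {v}) (Suc j)) H =
      elem_sym_on H (Suc j) * minor_sum (\<lambda>v. Var v ^ i :: 'a mpoly) H
      - minor_sum (\<lambda>v. Var v ^ Suc i * elem_sym_on (H - {v}) j) H"
    by (simp add: minor_sum_diff minor_sum_mult_left cong: minor_sum_cong)
  moreover have "minor_sum (\<lambda>v. Var v ^ i :: 'a mpoly) H = 0"
    by (rule minor_sum_power_eq_0) (use Suc.prems in simp_all)
  moreover have "minor_sum (\<lambda>v. Var v ^ Suc i * elem_sym_on (H - {v}) j :: 'a mpoly) H = 0"
    by (rule Suc.IH) (use Suc.prems in simp_all)
  ultimately show ?case
    by (simp del: power_Suc)
qed

(* The variable 0 is not a vertex of the complex and serves as a cone apex. *)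
lemma elem_sym_on_vandermonde_cone:
  assumes "finite F" "0 \<notin> F" "j + 1 \<le> card F"
  shows "elem_sym_on F j * vandermonde F =
    (\<Sum>v\<in>F. (-1) ^ position F v *
       (elem_sym_on (insert 0 (F - {v})) j * vandermonde (insert 0 (F - {v})) :: 'a::comm_ring_1 mpoly))"
proof -
  have pos: "\<forall>u\<in>F. 0 < u"
    using assms(2) by (auto intro!: gr0I)
  let ?E = "\<lambda>v. elem_sym_on (insert 0 F - {v}) j :: 'a mpoly"
  have "minor_sum (\<lambda>v. Var v ^ 0 * ?E v) (insert 0 F) = 0"
    by (rule minor_sum_elem_sym_on_eq_0) (use assms in auto)
  moreover have "minor_sum ?E (insert 0 F) =
      elem_sym_on F j * vandermonde F - minor_sum (\<lambda>v. ?E v * var_diff_prod 0 (F - {v})) F"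
    using minor_sum_insert_min[OF assms(1) pos, of ?E] assms(2) by simp
  moreover have "minor_sum (\<lambda>v. ?E v * var_diff_prod 0 (F - {v})) F =
      (\<Sum>v\<in>F. (-1) ^ position F v *
         (elem_sym_on (insert 0 (F - {v})) j * vandermonde (insert 0 (F - {v}))))"
    unfolding minor_sum_def
  proof (rule sum.cong)
    fix v assume "v \<in> F"
    then have "insert 0 F - {v} = insert 0 (F - {v})"
      using assms(2) by auto
    then show "(-1) ^ position F v * (?E v * var_diff_prod 0 (F - {v})) * vandermonde (F - {v}) =
        (-1) ^ position F v * (elem_sym_on (insert 0 (F - {v})) j * vandermonde (insert 0 (F - {v})))"
      using assms(1) pos by (simp add: vandermonde_insert_min mult.assoc)
  qed simp
  ultimately show ?thesis
    by simp
qed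

lemma elem_sym_on_complement:
  assumes "finite F" "k \<le> card F"
  shows "(\<Sum>\<tau>\<in>{\<tau>. \<tau> \<subseteq> F \<and> card \<tau> = k}. x_set (F - \<tau>)) = elem_sym_on F (card F - k)"
  unfolding elem_sym_on_def
proof (rule sum.reindex_bij_witness[of _ "\<lambda>\<sigma>. F - \<sigma>" "\<lambda>\<tau>. F - \<tau>"])
  fix \<sigma> assume "\<sigma> \<in> {\<sigma>. \<sigma> \<subseteq> F \<and> card \<sigma> = card F - k}"
  then show "F - (F - \<sigma>) = \<sigma>" "F - \<sigma> \<in> {\<tau>. \<tau> \<subseteq> F \<and> card \<tau> = k}"
    using assms by (auto simp: card_Diff_subset finite_subset)
next
  fix \<tau> assume "\<tau> \<in> {\<tau>. \<tau> \<subseteq> F \<and> card \<tau> = k}"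
  then show "F - (F - \<tau>) = \<tau>" "F - \<tau> \<in> {\<sigma>. \<sigma> \<subseteq> F \<and> card \<sigma> = card F - k}"
    using assms by (auto simp: card_Diff_subset finite_subset)
qed simp

section \<open>Boundaries in a simplicial complex\<close>

lemma single_0_sum: "Poly_Mapping.single 0 (\<Sum>x\<in>A. f x) = (\<Sum>x\<in>A. Poly_Mapping.single 0 (f x))"
  by (induction A rule: infinite_finite_induct) (auto simp: single_add)

lemma single_0_neg_one_power: "Poly_Mapping.single 0 ((-1) ^ k) = ((-1) ^ k :: 'a::comm_ring_1 mpoly)"
  by (induction k) (auto simp: mult_single single_uminus)

lemma boundary_coeff_single_0:
  "boundary_coeff \<Delta> (\<lambda>F. Poly_Mapping.single 0 (c F)) G =
    (Poly_Mapping.single 0 (boundary_coeff \<Delta> c G) :: 'a::comm_ring_1 mpoly)"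
  by (simp add: boundary_coeff_def single_0_sum mult_single flip: single_0_neg_one_power)

lemma finite_complex: "simplicial_complex n \<Delta> \<Longrightarrow> finite \<Delta>"
  by (rule finite_subset[of _ "Pow {1..n}"]) (auto simp: simplicial_complex_def)

lemma face_finite: "simplicial_complex n \<Delta> \<Longrightarrow> F \<in> \<Delta> \<Longrightarrow> finite F"
  unfolding simplicial_complex_def by (meson finite_atLeastAtMost finite_subset)

lemma d_facesD:
  assumes "simplicial_complex n \<Delta>" "F \<in> d_faces \<Delta> d"
  shows "F \<in> \<Delta>" "F \<subseteq> {1..n}" "finite F" "card F = d + 1"
  using assms face_finite[OF assms(1)] by (auto simp: simplicial_complex_def d_faces_def)

lemma finite_d_faces: "simplicial_complex n \<Delta> \<Longrightarrow> finite (d_faces \<Delta> d)"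
  using finite_complex by (simp add: d_faces_def)

lemma sum_d_faces_vertices:
  assumes sc: "simplicial_complex n \<Delta>"
  shows "(\<Sum>F\<in>d_faces \<Delta> d. \<Sum>v\<in>F. f F v) =
    (\<Sum>G\<in>{G\<in>\<Delta>. card G = d}. \<Sum>v\<in>{v. v \<notin> G \<and> insert v G \<in> \<Delta>}. f (insert v G) v)"
proof -
  let ?N = "\<lambda>G. {v. v \<notin> G \<and> insert v G \<in> \<Delta>}"
  have "finite (?N G)" for G
    by (rule finite_subset[of _ "{1..n}"]) (use sc in \<open>auto simp: simplicial_complex_def\<close>)
  moreover have "\<forall>F\<in>d_faces \<Delta> d. finite F"
    using d_facesD(3)[OF sc] by blast
  moreover have "(\<Sum>(F, v)\<in>Sigma (d_faces \<Delta> d) (\<lambda>F. F). f F v) =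
      (\<Sum>(G, v)\<in>Sigma {G\<in>\<Delta>. card G = d} ?N. f (insert v G) v)"
  proof (rule sum.reindex_bij_witness[of _ "\<lambda>(G, v). (insert v G, v)" "\<lambda>(F, v). (F - {v}, v)"])
    fix b assume "b \<in> Sigma (d_faces \<Delta> d) (\<lambda>F. F)"
    then obtain F v where b: "b = (F, v)" "F \<in> d_faces \<Delta> d" "v \<in> F"
      by auto
    note F = d_facesD[OF sc b(2)]
    have "F - {v} \<in> \<Delta>"
      using sc F(1) unfolding simplicial_complex_def by blast
    moreover have "insert v (F - {v}) = F"
      using b(3) by blast
    ultimately show "(case case b of (F, v) \<Rightarrow> (F - {v}, v) of (G, v) \<Rightarrow> (insert v G, v)) = b"
      "(case b of (F, v) \<Rightarrow> (F - {v}, v)) \<in> Sigma {G\<in>\<Delta>. card G = d} ?N"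
      "(case case b of (F, v) \<Rightarrow> (F - {v}, v) of (G, v) \<Rightarrow> f (insert v G) v) =
        (case b of (F, v) \<Rightarrow> f F v)"
      using b(1,3) F(1,3,4) by simp_all
  next
    fix a assume "a \<in> Sigma {G\<in>\<Delta>. card G = d} ?N"
    then obtain G v where a: "a = (G, v)" "G \<in> \<Delta>" "card G = d" "v \<notin> G" "insert v G \<in> \<Delta>"
      by auto
    then show "(case case a of (G, v) \<Rightarrow> (insert v G, v) of (F, v) \<Rightarrow> (F - {v}, v)) = a"
      "(case a of (G, v) \<Rightarrow> (insert v G, v)) \<in> Sigma (d_faces \<Delta> d) (\<lambda>F. F)"
      using face_finite[OF sc a(2)] by (auto simp: d_faces_def)
  qed
  ultimately show ?thesis
    using finite_complex[OF sc] finite_d_faces[OF sc] by (simp add: sum.Sigma)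
qed

lemma sum_d_faces_boundary:
  fixes c \<Phi> :: "nat set \<Rightarrow> 'a::comm_ring_1"
  assumes sc: "simplicial_complex n \<Delta>"
  shows "(\<Sum>F\<in>d_faces \<Delta> d. c F * (\<Sum>v\<in>F. (-1) ^ position F v * \<Phi> (F - {v}))) =
    (\<Sum>G\<in>{G\<in>\<Delta>. card G = d}. boundary_coeff \<Delta> c G * \<Phi> G)"
proof -
  have "position (insert v G) v = card {u\<in>G. u < v}" "insert v G - {v} = G" if "v \<notin> G" for v G
    using that unfolding position_def by (auto intro: arg_cong[where f = card])
  then show ?thesis
    unfolding sum_distrib_left sum_d_faces_vertices[OF sc]
    by (simp add: boundary_coeff_def sum_distrib_left sum_distrib_right mult_ac)
qed

section \<open>The stress F_Delta\<close>

lemma contract_x_set_F_Delta: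
  fixes c :: "nat set \<Rightarrow> 'a::comm_ring_1"
  assumes sc: "simplicial_complex n \<Delta>" and "finite \<tau>"
  shows "contract (x_set \<tau>) (F_Delta \<Delta> d c) =
    (\<Sum>F\<in>{F\<in>d_faces \<Delta> d. \<tau> \<subseteq> F}. Poly_Mapping.single 0 (c F) * (x_set (F - \<tau>) * vandermonde F))"
proof -
  have "contract (x_set \<tau>) (Poly_Mapping.single 0 (c F) * x_set F * vandermonde F) =
      (if \<tau> \<subseteq> F then Poly_Mapping.single 0 (c F) * (x_set (F - \<tau>) * vandermonde F) else 0)"
    if "F \<in> d_faces \<Delta> d" for F
  proof -
    have "finite F"
      using d_facesD(3)[OF sc that] .
    moreover have "vars_in F (x_set F * vandermonde F :: 'a mpoly)"
      by (intro vars_in_mult vars_in_x_set vars_in_vandermonde subset_refl)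
    ultimately show ?thesis
      using assms(2)
      by (simp add: mult.assoc contract_const_mult_right contract_x_set_mult contract_x_set_eq_0)
  qed
  then show ?thesis
    unfolding F_Delta_def contract_sum_right by (simp add: sum.inter_filter finite_d_faces[OF sc])
qed

lemma contract_SR_gen_F_Delta:
  assumes sc: "simplicial_complex n \<Delta>" and \<tau>: "\<tau> \<subseteq> {1..n}" "\<tau> \<notin> \<Delta>"
  shows "contract (x_set \<tau>) (F_Delta \<Delta> d c) = 0"
proof -
  have no_face: "{F\<in>d_faces \<Delta> d. \<tau> \<subseteq> F} = {}"
    using sc \<tau>(2) unfolding simplicial_complex_def d_faces_def by blast
  have "finite \<tau>"
    using \<tau>(1) finite_subset by blast
  then show ?thesis
    unfolding contract_x_set_F_Delta[OF sc \<open>finite \<tau>\<close>] no_face by simp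
qed

lemma contract_x_set_face_F_Delta:
  assumes sc: "simplicial_complex n \<Delta>" and F: "F \<in> d_faces \<Delta> d"
  shows "contract (x_set F) (F_Delta \<Delta> d c) = Poly_Mapping.single 0 (c F) * vandermonde F"
proof -
  have "G = F" if "G \<in> d_faces \<Delta> d" "F \<subseteq> G" for G
    using card_subset_eq[of G F] d_facesD(3,4)[OF sc] that F by metis
  then have "{G\<in>d_faces \<Delta> d. F \<subseteq> G} = {F}"
    using F by auto
  then show ?thesis
    unfolding contract_x_set_F_Delta[OF sc d_facesD(3)[OF sc F]] by (simp add: x_set_def)
qed

lemma Var_inject: "Var i = (Var j :: 'a::comm_ring_1 mpoly) \<longleftrightarrow> i = j"
proof
  assume "Var i = (Var j :: 'a mpoly)"
  then have "Poly_Mapping.lookup (Var j :: 'a mpoly) (Poly_Mapping.single i 1) \<noteq> 0"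
    by (metis Var_def lookup_single_eq one_neq_zero)
  then have "Poly_Mapping.single j (1::nat) = Poly_Mapping.single i 1"
    by (simp add: Var_def lookup_single when_def split: if_splits)
  then show "i = j"
    by (metis lookup_single_eq lookup_single_not_eq one_neq_zero)
qed simp

lemma vandermonde_neq_0: "finite F \<Longrightarrow> vandermonde F \<noteq> (0 :: 'a::idom mpoly)"
proof -
  assume "finite F"
  then have "finite {(i, j). i \<in> F \<and> j \<in> F \<and> i < j}"
    by (auto intro: finite_subset[of _ "F \<times> F"])
  then show ?thesis
    unfolding vandermonde_def by (auto simp: prod_zero_iff Var_inject)
qed

lemma F_Delta_neq_0:
  fixes c :: "nat set \<Rightarrow> 'a::idom"
  assumes sc: "simplicial_complex n \<Delta>" and F: "F \<in> d_faces \<Delta> d" "c F \<noteq> 0"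
  shows "F_Delta \<Delta> d c \<noteq> 0"
proof
  assume "F_Delta \<Delta> d c = 0"
  then have "Poly_Mapping.single 0 (c F) * vandermonde F = (0 :: 'a mpoly)"
    using contract_x_set_face_F_Delta[OF sc F(1), of c] by simp
  moreover have "Poly_Mapping.single 0 (c F) \<noteq> (0 :: 'a mpoly)"
    using F(2) by (metis lookup_single_eq lookup_zero)
  moreover have "vandermonde F \<noteq> (0 :: 'a mpoly)"
    using vandermonde_neq_0 d_facesD(3)[OF sc F(1)] by blast
  ultimately show False
    by simp
qed

lemma contract_elem_sym_F_Delta_eq:
  fixes c :: "nat set \<Rightarrow> 'a::comm_ring_1"
  assumes sc: "simplicial_complex n \<Delta>" and "k \<le> d + 1"
  shows "contract (elem_sym n k) (F_Delta \<Delta> d c) =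
    (\<Sum>F\<in>d_faces \<Delta> d. Poly_Mapping.single 0 (c F) * (elem_sym_on F (d + 1 - k) * vandermonde F))"
proof -
  let ?D = "d_faces \<Delta> d" and ?T = "{\<tau>. \<tau> \<subseteq> {1..n} \<and> card \<tau> = k}"
  let ?t = "\<lambda>\<tau> F. Poly_Mapping.single 0 (c F) * (x_set (F - \<tau>) * vandermonde F) :: 'a mpoly"
  have "contract (elem_sym n k) (F_Delta \<Delta> d c) = (\<Sum>\<tau>\<in>?T. \<Sum>F\<in>{F. F \<in> ?D \<and> \<tau> \<subseteq> F}. ?t \<tau> F)"
    unfolding elem_sym_def contract_sum_left
    by (intro sum.cong refl contract_x_set_F_Delta[OF sc]) (auto dest: finite_subset)
  also have "\<dots> = (\<Sum>F\<in>?D. \<Sum>\<tau>\<in>{\<tau>. \<tau> \<in> ?T \<and> \<tau> \<subseteq> F}. ?t \<tau> F)"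
    by (rule sum.swap_restrict) (simp_all add: finite_d_faces[OF sc])
  also have "\<dots> = (\<Sum>F\<in>?D. Poly_Mapping.single 0 (c F) * (elem_sym_on F (d + 1 - k) * vandermonde F))"
  proof (rule sum.cong[OF refl])
    fix F assume "F \<in> ?D"
    note F = d_facesD[OF sc this]
    have "{\<tau>. \<tau> \<in> ?T \<and> \<tau> \<subseteq> F} = {\<tau>. \<tau> \<subseteq> F \<and> card \<tau> = k}"
      using F(2) by auto
    then have "(\<Sum>\<tau>\<in>{\<tau>. \<tau> \<in> ?T \<and> \<tau> \<subseteq> F}. ?t \<tau> F) = Poly_Mapping.single 0 (c F) *
        ((\<Sum>\<tau>\<in>{\<tau>. \<tau> \<subseteq> F \<and> card \<tau> = k}. x_set (F - \<tau>)) * vandermonde F)"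
      by (simp add: sum_distrib_left sum_distrib_right)
    then show "(\<Sum>\<tau>\<in>{\<tau>. \<tau> \<in> ?T \<and> \<tau> \<subseteq> F}. ?t \<tau> F) =
        Poly_Mapping.single 0 (c F) * (elem_sym_on F (d + 1 - k) * vandermonde F)"
      using elem_sym_on_complement[OF F(3), of k, where 'a = 'a] F(4) assms(2) by simp
  qed
  finally show ?thesis .
qed

lemma contract_elem_sym_F_Delta:
  fixes c :: "nat set \<Rightarrow> 'a::comm_ring_1"
  assumes sc: "simplicial_complex n \<Delta>" and cyc: "is_top_cycle \<Delta> d c"
    and k: "1 \<le> k" "k \<le> d + 1"
  shows "contract (elem_sym n k) (F_Delta \<Delta> d c) = 0"
proof -
  let ?c = "\<lambda>F. Poly_Mapping.single 0 (c F) :: 'a mpoly"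
  let ?\<Phi> = "\<lambda>G. elem_sym_on (insert 0 G) (d + 1 - k) * vandermonde (insert 0 G) :: 'a mpoly"
  have "contract (elem_sym n k) (F_Delta \<Delta> d c) =
      (\<Sum>F\<in>d_faces \<Delta> d. ?c F * (elem_sym_on F (d + 1 - k) * vandermonde F))"
    by (rule contract_elem_sym_F_Delta_eq[OF sc k(2)])
  also have "\<dots> = (\<Sum>F\<in>d_faces \<Delta> d. ?c F * (\<Sum>v\<in>F. (-1) ^ position F v * ?\<Phi> (F - {v})))"
  proof (rule sum.cong[OF refl])
    fix F assume "F \<in> d_faces \<Delta> d"
    note F = d_facesD[OF sc this]
    have "0 \<notin> F"
      using F(2) by auto
    then show "?c F * (elem_sym_on F (d + 1 - k) * vandermonde F) =
        ?c F * (\<Sum>v\<in>F. (-1) ^ position F v * ?\<Phi> (F - {v}))"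
      using elem_sym_on_vandermonde_cone[OF F(3), where 'a = 'a] F(4) k by simp
  qed
  also have "\<dots> = 0"
    using sum_d_faces_boundary[OF sc, where c = ?c and \<Phi> = ?\<Phi> and d = d] cyc
    by (simp add: is_top_cycle_def boundary_coeff_single_0)
  finally show ?thesis .
qed

lemma F_Delta_in_poly_ring:
  assumes sc: "simplicial_complex n \<Delta>"
  shows "F_Delta \<Delta> d c \<in> poly_ring n"
proof -
  have "vars_in {1..n} (Poly_Mapping.single 0 (c F) * x_set F * vandermonde F)"
    if "F \<in> d_faces \<Delta> d" for F
    using d_facesD(2)[OF sc that]
    by (intro vars_in_mult vars_in_single vars_in_x_set vars_in_vandermonde) simp_all
  then show ?thesis
    unfolding poly_ring_eq_vars_in F_Delta_def by (auto intro: vars_in_sum)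
qed

lemma homogeneous_F_Delta:
  assumes sc: "simplicial_complex n \<Delta>"
  shows "homogeneous ((d + 2) choose 2) (F_Delta \<Delta> d c)"
  unfolding F_Delta_def
proof (rule homogeneous_sum)
  fix F assume "F \<in> d_faces \<Delta> d"
  note F = d_facesD[OF sc this]
  have "(d + 2) choose 2 = 0 + card F + (card F choose 2)"
    using F(4) by (simp add: numeral_2_eq_2)
  then show "homogeneous ((d + 2) choose 2) (Poly_Mapping.single 0 (c F) * x_set F * vandermonde F)"
    using F(3) by (metis homogeneous_mult homogeneous_const homogeneous_x_set homogeneous_vandermonde)
qed

lemma F_Delta_in_coinv_stresses:
  assumes sc: "simplicial_complex n \<Delta>" and cyc: "is_top_cycle \<Delta> d c"
  shows "F_Delta \<Delta> d c \<in> coinv_stresses n \<Delta> d ((d + 2) choose 2)"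
proof -
  have "contract g (F_Delta \<Delta> d c) = 0" if "g \<in> SR_gens n \<Delta> \<union> elem_sym n ` {1..d+1}" for g
    using that contract_SR_gen_F_Delta[OF sc] contract_elem_sym_F_Delta[OF sc cyc]
    unfolding SR_gens_def by auto
  then have "\<forall>g\<in>coinv_ideal n \<Delta> d. contract g (F_Delta \<Delta> d c) = 0"
    unfolding coinv_ideal_def using contract_ideal_gen_eq_0 by blast
  then show ?thesis
    using F_Delta_in_poly_ring[OF sc, of d c] homogeneous_F_Delta[OF sc, of d c]
    by (simp add: coinv_stresses_def inverse_system_deg_def)
qed

theorem theorem4p2:
  fixes n d :: nat and \<Delta> :: "nat set set" and c :: "nat set \<Rightarrow> 'a::field"
  assumes "simplicial_complex n \<Delta>"
    and "dim_complex \<Delta> d"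
    and "is_top_cycle \<Delta> d c"
    and "\<exists>F\<in>d_faces \<Delta> d. c F \<noteq> 0"
  shows "F_Delta \<Delta> d c \<in> coinv_stresses n \<Delta> d ((d + 2) choose 2)
    \<and> (\<exists>G\<in>coinv_stresses n \<Delta> d ((d + 2) choose 2). G \<noteq> (0::'a mpoly))"
proof -
  obtain F where F: "F \<in> d_faces \<Delta> d" "c F \<noteq> 0"
    using assms(4) by blast
  have "F_Delta \<Delta> d c \<in> coinv_stresses n \<Delta> d ((d + 2) choose 2)"
    by (rule F_Delta_in_coinv_stresses[OF assms(1,3)])
  moreover have "F_Delta \<Delta> d c \<noteq> 0"
    by (rule F_Delta_neq_0[where c = c, OF assms(1) F])
  ultimately show ?thesis
    by blast
qed

end
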